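(* Let $(X,d)$ be a pseudometric space of diameter at most 1 and let $\phi:(X,d)\to(\bar X,\bar d)$ be its metric completion (so $\bar X$ is the set of equivalence classes of Cauchy sequences in $X$, with $(x_n)\sim(y_n)$ iff $\lim_n d(x_n,y_n)=0$, $\bar d((x_n),(y_n))=\lim_n d(x_n,y_n)$, and $\phi(x)$ the class of the constant sequence). Then $G(\phi)$ is an isomorphism in $\mathrm{ER}(\mathbf U)$, where $G:\mathbf{pMet}_1\to\mathrm{ER}(\mathbf U)$ is given by $G(X,d)=(X,d)$ and $G(f)=[(x,y)\mapsto d(f(x),y)]$.
   Context: $\mathbf{pMet}_1$: pseudometric spaces with all distances $\le 1$ and uniformly continuous maps. For functions $\alpha,\beta:Z\to[0,1]$ write $\alpha\sqsubseteq\beta$ if for every $\varepsilon>0$ there exists $\delta>0$ such that for all $z\in Z$, $\alpha(z)\le\delta$ implies $\beta(z)\le\varepsilon$. The category $\mathrm{ER}(\mathbf U)$: objects are pairs $(X,R)$ with $X$ a set and $R:X\times X\to[0,1]$ such that $R(x,x)=0$ for all $x$, $R(x,y)\sqsubseteq R(y,x)$ as functions of $(x,y)$, and $\max(R(x,y),R(y,z))\sqsubseteq R(x,z)$ as functions of $(x,y,z)$. A functional relation $(X,R)\to(Y,S)$ is a function $F:X\times Y\to[0,1]$ with $\max(F(x,y),R(x,x'),S(y,y'))\sqsubseteq F(x',y')$ as functions of $(x,x',y,y')$, $\max(F(x,y),F(x,y'))\sqsubseteq S(y,y')$ as functions of $(x,y,y')$, and $\inf_{y\in Y}F(x,y)=0$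 for all $x$. Morphisms are equivalence classes $[F]$ of functional relations, with $F\sim F'$ iff $F\sqsubseteq F'$ as functions on $X\times Y$; identity $[R]$; composite of $[F]$ and $[H]$ is $[(x,z)\mapsto\inf_y\max(F(x,y),H(y,z))]$. *)

theory Defs
  imports Complex_Main
begin

definition sqle :: "'z set \<Rightarrow> ('z \<Rightarrow> real) \<Rightarrow> ('z \<Rightarrow> real) \<Rightarrow> bool" where
  "sqle Z \<alpha> \<beta> \<longleftrightarrow> (\<forall>\<epsilon>>0. \<exists>\<delta>>0. \<forall>z\<in>Z. \<alpha> z \<le> \<delta> \<longrightarrow> \<beta> z \<le> \<epsilon>)"

definition er_obj :: "'a set \<Rightarrow> ('a \<Rightarrow> 'a \<Rightarrow> real) \<Rightarrow> bool" where
  "er_obj X R \<longleftrightarrow>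
     (\<forall>x\<in>X. \<forall>y\<in>X. 0 \<le> R x y \<and> R x y \<le> 1) \<and>
     (\<forall>x\<in>X. R x x = 0) \<and>
     sqle (X \<times> X) (\<lambda>(x,y). R x y) (\<lambda>(x,y). R y x) \<and>
     sqle (X \<times> X \<times> X) (\<lambda>(x,y,z). max (R x y) (R y z)) (\<lambda>(x,y,z). R x z)"

text \<open>Functional relation (X,R) -> (Y,S). Since F takes values in [0,1],
  inf_y F(x,y) = 0 is written out as: for every eps > 0 some y has F(x,y) < eps.\<close>
definition func_rel ::
  "'a set \<Rightarrow> ('a \<Rightarrow> 'a \<Rightarrow> real) \<Rightarrow> 'b set \<Rightarrow> ('b \<Rightarrow> 'b \<Rightarrow> real) \<Rightarrow> ('a \<Rightarrow> 'b \<Rightarrow> real) \<Rightarrow> bool" where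
  "func_rel X R Y S F \<longleftrightarrow>
     (\<forall>x\<in>X. \<forall>y\<in>Y. 0 \<le> F x y \<and> F x y \<le> 1) \<and>
     sqle (X \<times> X \<times> Y \<times> Y) (\<lambda>(x,x',y,y'). max (F x y) (max (R x x') (S y y')))
                           (\<lambda>(x,x',y,y'). F x' y') \<and>
     sqle (X \<times> Y \<times> Y) (\<lambda>(x,y,y'). max (F x y) (F x y')) (\<lambda>(x,y,y'). S y y') \<and>
     (\<forall>x\<in>X. \<forall>\<epsilon>>0. \<exists>y\<in>Y. F x y < \<epsilon>)"

text \<open>Equivalence of functional relations (equality of morphisms): F ~ F' iff F \<sqsubseteq> F'.\<close>
definition rel_equiv :: "'a set \<Rightarrow> 'b set \<Rightarrow> ('a \<Rightarrow> 'b \<Rightarrow> real) \<Rightarrow> ('a \<Rightarrow> 'b \<Rightarrow> real) \<Rightarrow> bool" where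
  "rel_equiv X Y F F' \<longleftrightarrow> sqle (X \<times> Y) (\<lambda>(x,y). F x y) (\<lambda>(x,y). F' x y)"

definition rel_comp :: "'b set \<Rightarrow> ('a \<Rightarrow> 'b \<Rightarrow> real) \<Rightarrow> ('b \<Rightarrow> 'c \<Rightarrow> real) \<Rightarrow> 'a \<Rightarrow> 'c \<Rightarrow> real" where
  "rel_comp Y F H = (\<lambda>x z. INF y\<in>Y. max (F x y) (H y z))"

definition er_iso ::
  "'a set \<Rightarrow> ('a \<Rightarrow> 'a \<Rightarrow> real) \<Rightarrow> 'b set \<Rightarrow> ('b \<Rightarrow> 'b \<Rightarrow> real) \<Rightarrow> ('a \<Rightarrow> 'b \<Rightarrow> real) \<Rightarrow> bool" where
  "er_iso X R Y S F \<longleftrightarrow> func_rel X R Y S F \<and>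
     (\<exists>H. func_rel Y S X R H \<and>
          rel_equiv X X (rel_comp Y F H) R \<and>
          rel_equiv Y Y (rel_comp X H F) S)"

definition pmet1 :: "'a set \<Rightarrow> ('a \<Rightarrow> 'a \<Rightarrow> real) \<Rightarrow> bool" where
  "pmet1 X d \<longleftrightarrow>
     (\<forall>x\<in>X. d x x = 0) \<and>
     (\<forall>x\<in>X. \<forall>y\<in>X. d x y = d y x \<and> 0 \<le> d x y \<and> d x y \<le> 1) \<and>
     (\<forall>x\<in>X. \<forall>y\<in>X. \<forall>z\<in>X. d x z \<le> d x y + d y z)"

definition cauchy_in :: "'a set \<Rightarrow> ('a \<Rightarrow> 'a \<Rightarrow> real) \<Rightarrow> (nat \<Rightarrow> 'a) \<Rightarrow> bool" where
  "cauchy_in X d s \<longleftrightarrow> (\<forall>n. s n \<in> X) \<and>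
     (\<forall>\<epsilon>>0. \<exists>N. \<forall>m\<ge>N. \<forall>n\<ge>N. d (s m) (s n) < \<epsilon>)"

definition seq_equiv :: "('a \<Rightarrow> 'a \<Rightarrow> real) \<Rightarrow> (nat \<Rightarrow> 'a) \<Rightarrow> (nat \<Rightarrow> 'a) \<Rightarrow> bool" where
  "seq_equiv d s t \<longleftrightarrow> (\<lambda>n. d (s n) (t n)) \<longlonglongrightarrow> 0"

definition seq_class :: "'a set \<Rightarrow> ('a \<Rightarrow> 'a \<Rightarrow> real) \<Rightarrow> (nat \<Rightarrow> 'a) \<Rightarrow> (nat \<Rightarrow> 'a) set" where
  "seq_class X d s = {t. cauchy_in X d t \<and> seq_equiv d s t}"

definition completion :: "'a set \<Rightarrow> ('a \<Rightarrow> 'a \<Rightarrow> real) \<Rightarrow> (nat \<Rightarrow> 'a) set set" where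
  "completion X d = {seq_class X d s | s. cauchy_in X d s}"

definition completion_dist :: "('a \<Rightarrow> 'a \<Rightarrow> real) \<Rightarrow> (nat \<Rightarrow> 'a) set \<Rightarrow> (nat \<Rightarrow> 'a) set \<Rightarrow> real" where
  "completion_dist d A B = lim (\<lambda>n. d ((SOME s. s \<in> A) n) ((SOME t. t \<in> B) n))"

definition completion_emb :: "'a set \<Rightarrow> ('a \<Rightarrow> 'a \<Rightarrow> real) \<Rightarrow> 'a \<Rightarrow> (nat \<Rightarrow> 'a) set" where
  "completion_emb X d x = seq_class X d (\<lambda>_. x)"

definition G_map :: "('b \<Rightarrow> 'b \<Rightarrow> real) \<Rightarrow> ('a \<Rightarrow> 'b) \<Rightarrow> 'a \<Rightarrow> 'b \<Rightarrow> real" where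
  "G_map e f = (\<lambda>x y. e (f x) y)"

end

theory Submission
  imports Defs
begin

text \<open>An isometric embedding with dense image induces an isomorphism in ER(U): the relation
  e(f x, y) and its converse e(y, f x) are mutually inverse functional relations, and every
  condition to check reduces to a triangle inequality bounding the target distance by a fixed
  multiple of the maximum of the given ones. The completion embedding is such an embedding,
  because the completion distance of two classes is the limit of the distances of arbitrary
  representatives.\<close>

lemma sqle_of_le_mult:
  fixes c :: real
  assumes "c > 0" and "\<And>z. z \<in> Z \<Longrightarrow> \<beta> z \<le> c * \<alpha> z"
  shows "sqle Z \<alpha> \<beta>"
  unfolding sqle_def
proof (intro allI impI)
  fix \<epsilon> :: real assume "\<epsilon> > 0"
  have "\<beta> z \<le> \<epsilon>" if "z \<in> Z" "\<alpha> z \<le> \<epsilon> / c" for z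
  proof -
    have "c * \<alpha> z \<le> \<epsilon>" using that(2) \<open>c > 0\<close> by (simp add: field_simps)
    then show ?thesis using assms(2)[OF that(1)] by linarith
  qed
  then show "\<exists>\<delta>>0. \<forall>z\<in>Z. \<alpha> z \<le> \<delta> \<longrightarrow> \<beta> z \<le> \<epsilon>"
    using \<open>\<epsilon> > 0\<close> \<open>c > 0\<close> by (intro exI[of _ "\<epsilon> / c"]) auto
qed

lemma pmet1D:
  assumes "pmet1 X d"
  shows "x \<in> X \<Longrightarrow> d x x = 0"
    and "x \<in> X \<Longrightarrow> y \<in> X \<Longrightarrow> d x y = d y x"
    and "x \<in> X \<Longrightarrow> y \<in> X \<Longrightarrow> 0 \<le> d x y"
    and "x \<in> X \<Longrightarrow> y \<in> X \<Longrightarrow> d x y \<le> 1"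
    and "x \<in> X \<Longrightarrow> y \<in> X \<Longrightarrow> z \<in> X \<Longrightarrow> d x z \<le> d x y + d y z"
  using assms unfolding pmet1_def by auto

lemma pmet1_dist_diff_le:
  assumes "pmet1 X d" "x \<in> X" "y \<in> X" "x' \<in> X" "y' \<in> X"
  shows "\<bar>d x y - d x' y'\<bar> \<le> d x x' + d y y'"
  using pmet1D(2,5)[OF assms(1)] assms(2-5)
  by (smt (verit, best))

lemma tendsto_zero_if_abs_le:
  fixes u g :: "nat \<Rightarrow> real"
  assumes "\<And>n. \<bar>u n\<bar> \<le> g n" and "g \<longlonglongrightarrow> 0"
  shows "u \<longlonglongrightarrow> 0"
proof -
  have "(\<lambda>n. \<bar>u n\<bar>) \<longlonglongrightarrow> 0"
    by (rule tendsto_sandwich[OF _ _ tendsto_const assms(2)]) (use assms(1) in auto)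
  then show ?thesis by (simp add: tendsto_rabs_zero_iff)
qed

locale isometric_embedding =
  fixes X :: "'a set" and d :: "'a \<Rightarrow> 'a \<Rightarrow> real"
    and Y :: "'b set" and e :: "'b \<Rightarrow> 'b \<Rightarrow> real"
    and f :: "'a \<Rightarrow> 'b"
  assumes pmet_X: "pmet1 X d" and pmet_Y: "pmet1 Y e"
    and maps_into: "\<And>x. x \<in> X \<Longrightarrow> f x \<in> Y"
    and isometric: "\<And>x x'. x \<in> X \<Longrightarrow> x' \<in> X \<Longrightarrow> e (f x) (f x') = d x x'"
begin

lemmas e_self = pmet1D(1)[OF pmet_Y]
  and e_sym = pmet1D(2)[OF pmet_Y]
  and e_nonneg = pmet1D(3)[OF pmet_Y]
  and e_le_1 = pmet1D(4)[OF pmet_Y]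
  and e_triangle = pmet1D(5)[OF pmet_Y]

lemma func_rel_embedding: "func_rel X d Y e (\<lambda>x y. e (f x) y)"
  unfolding func_rel_def
proof (intro conjI)
  show "\<forall>x\<in>X. \<forall>y\<in>Y. 0 \<le> e (f x) y \<and> e (f x) y \<le> 1"
    using e_nonneg e_le_1 maps_into by blast
  show "sqle (X \<times> X \<times> Y \<times> Y) (\<lambda>(x, x', y, y'). max (e (f x) y) (max (d x x') (e y y')))
          (\<lambda>(x, x', y, y'). e (f x') y')"
  proof (rule sqle_of_le_mult[of 3], simp, clarify)
    fix x x' y y' assume "x \<in> X" "x' \<in> X" "y \<in> Y" "y' \<in> Y"
    moreover from this have "e (f x') y' \<le> e (f x') (f x) + e (f x) y + e y y'"
      using e_triangle maps_into by (meson add_mono order_trans order_refl)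
    ultimately show "e (f x') y' \<le> 3 * max (e (f x) y) (max (d x x') (e y y'))"
      using isometric pmet1D(2)[OF pmet_X] by (smt (verit))
  qed
  show "sqle (X \<times> Y \<times> Y) (\<lambda>(x, y, y'). max (e (f x) y) (e (f x) y')) (\<lambda>(x, y, y'). e y y')"
  proof (rule sqle_of_le_mult[of 2], simp, clarify)
    fix x y y' assume "x \<in> X" "y \<in> Y" "y' \<in> Y"
    then have "e y y' \<le> e (f x) y + e (f x) y'"
      using e_triangle e_sym maps_into by metis
    then show "e y y' \<le> 2 * max (e (f x) y) (e (f x) y')" by linarith
  qed
  show "\<forall>x\<in>X. \<forall>\<epsilon>>0. \<exists>y\<in>Y. e (f x) y < \<epsilon>"
    using maps_into e_self by force
qed

lemma func_rel_embedding_converse: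
  assumes dense: "\<And>y \<epsilon>. y \<in> Y \<Longrightarrow> \<epsilon> > 0 \<Longrightarrow> \<exists>x\<in>X. e (f x) y < \<epsilon>"
  shows "func_rel Y e X d (\<lambda>y x. e y (f x))"
  unfolding func_rel_def
proof (intro conjI)
  show "\<forall>y\<in>Y. \<forall>x\<in>X. 0 \<le> e y (f x) \<and> e y (f x) \<le> 1"
    using e_nonneg e_le_1 maps_into by blast
  show "sqle (Y \<times> Y \<times> X \<times> X) (\<lambda>(y, y', x, x'). max (e y (f x)) (max (e y y') (d x x')))
          (\<lambda>(y, y', x, x'). e y' (f x'))"
  proof (rule sqle_of_le_mult[of 3], simp, clarify)
    fix x x' y y' assume "x \<in> X" "x' \<in> X" "y \<in> Y" "y' \<in> Y"
    moreover from this have "e y' (f x') \<le> e y' y + e y (f x) + e (f x) (f x')"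
      using e_triangle maps_into by (meson add_mono order_trans order_refl)
    ultimately show "e y' (f x') \<le> 3 * max (e y (f x)) (max (e y y') (d x x'))"
      using isometric e_sym by (smt (verit))
  qed
  show "sqle (Y \<times> X \<times> X) (\<lambda>(y, x, x'). max (e y (f x)) (e y (f x'))) (\<lambda>(y, x, x'). d x x')"
  proof (rule sqle_of_le_mult[of 2], simp, clarify)
    fix y x x' assume "y \<in> Y" "x \<in> X" "x' \<in> X"
    then have "d x x' \<le> e y (f x) + e y (f x')"
      using e_triangle e_sym maps_into isometric by metis
    then show "d x x' \<le> 2 * max (e y (f x)) (e y (f x'))" by linarith
  qed
  show "\<forall>y\<in>Y. \<forall>\<epsilon>>0. \<exists>x\<in>X. e y (f x) < \<epsilon>"
    using dense e_sym maps_into by metis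
qed

lemma rel_equiv_comp_embedding:
  "rel_equiv X X (rel_comp Y (\<lambda>x y. e (f x) y) (\<lambda>y x. e y (f x))) d"
  unfolding rel_equiv_def rel_comp_def
proof (rule sqle_of_le_mult[of 2], simp, clarify)
  fix x x' assume "x \<in> X" "x' \<in> X"
  have "d x x' / 2 \<le> (INF y\<in>Y. max (e (f x) y) (e y (f x')))"
  proof (rule cINF_greatest)
    show "Y \<noteq> {}" using maps_into \<open>x \<in> X\<close> by blast
    fix y assume "y \<in> Y"
    with \<open>x \<in> X\<close> \<open>x' \<in> X\<close> have "d x x' \<le> e (f x) y + e y (f x')"
      using e_triangle maps_into isometric by metis
    then show "d x x' / 2 \<le> max (e (f x) y) (e y (f x'))" by linarith
  qed
  then show "d x x' \<le> 2 * (INF y\<in>Y. max (e (f x) y) (e y (f x')))" by linarith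
qed

lemma rel_equiv_comp_embedding_converse:
  assumes dense: "\<And>y \<epsilon>. y \<in> Y \<Longrightarrow> \<epsilon> > 0 \<Longrightarrow> \<exists>x\<in>X. e (f x) y < \<epsilon>"
  shows "rel_equiv Y Y (rel_comp X (\<lambda>y x. e y (f x)) (\<lambda>x y. e (f x) y)) e"
  unfolding rel_equiv_def rel_comp_def
proof (rule sqle_of_le_mult[of 2], simp, clarify)
  fix y y' assume "y \<in> Y" "y' \<in> Y"
  have "e y y' / 2 \<le> (INF x\<in>X. max (e y (f x)) (e (f x) y'))"
  proof (rule cINF_greatest)
    show "X \<noteq> {}" using dense[OF \<open>y \<in> Y\<close>, of 1] by auto
    fix x assume "x \<in> X"
    with \<open>y \<in> Y\<close> \<open>y' \<in> Y\<close> have "e y y' \<le> e y (f x) + e (f x) y'"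
      using e_triangle maps_into by metis
    then show "e y y' / 2 \<le> max (e y (f x)) (e (f x) y')" by linarith
  qed
  then show "e y y' \<le> 2 * (INF x\<in>X. max (e y (f x)) (e (f x) y'))" by linarith
qed

lemma er_iso_embedding:
  assumes "\<And>y \<epsilon>. y \<in> Y \<Longrightarrow> \<epsilon> > 0 \<Longrightarrow> \<exists>x\<in>X. e (f x) y < \<epsilon>"
  shows "er_iso X d Y e (\<lambda>x y. e (f x) y)"
  unfolding er_iso_def
  using func_rel_embedding func_rel_embedding_converse[OF assms]
    rel_equiv_comp_embedding rel_equiv_comp_embedding_converse[OF assms] by blast

end

context
  fixes X :: "'a set" and d :: "'a \<Rightarrow> 'a \<Rightarrow> real"
  assumes pmet: "pmet1 X d"
begin

lemma cauchy_in_const: "x \<in> X \<Longrightarrow> cauchy_in X d (\<lambda>_. x)"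
  using pmet1D(1)[OF pmet] unfolding cauchy_in_def by auto

lemma seq_class_refl: "cauchy_in X d s \<Longrightarrow> s \<in> seq_class X d s"
  using pmet1D(1)[OF pmet] unfolding seq_class_def seq_equiv_def cauchy_in_def by simp

lemma completion_emb_mem: "x \<in> X \<Longrightarrow> completion_emb X d x \<in> completion X d"
  unfolding completion_emb_def completion_def using cauchy_in_const by blast

lemma const_mem_completion_emb: "x \<in> X \<Longrightarrow> (\<lambda>_. x) \<in> completion_emb X d x"
  unfolding completion_emb_def using seq_class_refl cauchy_in_const by blast

lemma cauchy_in_if_mem_completion: "A \<in> completion X d \<Longrightarrow> a \<in> A \<Longrightarrow> cauchy_in X d a"
  unfolding completion_def seq_class_def by blast

lemma seq_equiv_if_mem_completion:
  assumes "A \<in> completion X d" "a \<in> A" "b \<in> A"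
  shows "(\<lambda>n. d (a n) (b n)) \<longlonglongrightarrow> 0"
proof -
  obtain s where s: "cauchy_in X d s" and A: "A = seq_class X d s"
    using assms(1) unfolding completion_def by blast
  have "cauchy_in X d a" "cauchy_in X d b"
    using assms cauchy_in_if_mem_completion by blast+
  with s have X: "s n \<in> X" "a n \<in> X" "b n \<in> X" for n
    unfolding cauchy_in_def by simp_all
  have "(\<lambda>n. d (s n) (a n)) \<longlonglongrightarrow> 0" "(\<lambda>n. d (s n) (b n)) \<longlonglongrightarrow> 0"
    using assms(2,3) unfolding A seq_class_def seq_equiv_def by simp_all
  then have lim: "(\<lambda>n. d (s n) (a n) + d (s n) (b n)) \<longlonglongrightarrow> 0"
    using tendsto_add by fastforce
  have bound: "\<bar>d (a n) (b n)\<bar> \<le> d (s n) (a n) + d (s n) (b n)" for n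
  proof -
    have "d (a n) (b n) \<le> d (a n) (s n) + d (s n) (b n)" by (rule pmet1D(5)[OF pmet X(2,1,3)])
    moreover have "d (a n) (s n) = d (s n) (a n)" by (rule pmet1D(2)[OF pmet X(2,1)])
    moreover have "0 \<le> d (a n) (b n)" by (rule pmet1D(3)[OF pmet X(2,3)])
    ultimately show ?thesis by simp
  qed
  show ?thesis by (rule tendsto_zero_if_abs_le[OF bound lim])
qed

lemma convergent_dist_cauchy_in:
  assumes a: "cauchy_in X d a" and b: "cauchy_in X d b"
  shows "convergent (\<lambda>n. d (a n) (b n))"
proof -
  have "Cauchy (\<lambda>n. d (a n) (b n))"
  proof (rule metric_CauchyI)
    fix \<epsilon> :: real assume "\<epsilon> > 0"
    then obtain Na Nb where
      Na: "\<And>m n. m \<ge> Na \<Longrightarrow> n \<ge> Na \<Longrightarrow> d (a m) (a n) < \<epsilon> / 2" and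
      Nb: "\<And>m n. m \<ge> Nb \<Longrightarrow> n \<ge> Nb \<Longrightarrow> d (b m) (b n) < \<epsilon> / 2"
      using a b unfolding cauchy_in_def by (meson half_gt_zero)
    have "dist (d (a m) (b m)) (d (a n) (b n)) < \<epsilon>" if "m \<ge> max Na Nb" "n \<ge> max Na Nb" for m n
      using pmet1_dist_diff_le[OF pmet, of "a m" "b m" "a n" "b n"] Na[of m n] Nb[of m n] that
        a b unfolding cauchy_in_def dist_real_def by force
    then show "\<exists>M. \<forall>m\<ge>M. \<forall>n\<ge>M. dist (d (a m) (b m)) (d (a n) (b n)) < \<epsilon>" by blast
  qed
  then show ?thesis by (simp add: Cauchy_convergent_iff)
qed

lemma completion_dist_tendsto:
  assumes A: "A \<in> completion X d" "a \<in> A" and B: "B \<in> completion X d" "b \<in> B"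
  shows "(\<lambda>n. d (a n) (b n)) \<longlonglongrightarrow> completion_dist d A B"
proof -
  define a0 where "a0 = (SOME a. a \<in> A)"
  define b0 where "b0 = (SOME b. b \<in> B)"
  have "a0 \<in> A" unfolding a0_def using A(2) by (rule someI[of "\<lambda>a. a \<in> A"])
  have "b0 \<in> B" unfolding b0_def using B(2) by (rule someI[of "\<lambda>b. b \<in> B"])
  have cauchy: "cauchy_in X d a" "cauchy_in X d a0" "cauchy_in X d b" "cauchy_in X d b0"
    using A B \<open>a0 \<in> A\<close> \<open>b0 \<in> B\<close> cauchy_in_if_mem_completion by blast+
  have "(\<lambda>n. d (a0 n) (b0 n)) \<longlonglongrightarrow> completion_dist d A B"
    using convergent_dist_cauchy_in[OF cauchy(2,4)]
    unfolding completion_dist_def a0_def[symmetric] b0_def[symmetric] convergent_LIMSEQ_iff .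
  moreover have "(\<lambda>n. d (a n) (b n) - d (a0 n) (b0 n)) \<longlonglongrightarrow> 0"
  proof (rule tendsto_zero_if_abs_le)
    have "a n \<in> X" "b n \<in> X" "a0 n \<in> X" "b0 n \<in> X" for n
      using cauchy unfolding cauchy_in_def by simp_all
    then show "\<bar>d (a n) (b n) - d (a0 n) (b0 n)\<bar> \<le> d (a n) (a0 n) + d (b n) (b0 n)" for n
      by (rule pmet1_dist_diff_le[OF pmet])
    show "(\<lambda>n. d (a n) (a0 n) + d (b n) (b0 n)) \<longlonglongrightarrow> 0"
      using tendsto_add[OF seq_equiv_if_mem_completion[OF A \<open>a0 \<in> A\<close>]
          seq_equiv_if_mem_completion[OF B \<open>b0 \<in> B\<close>]] by simp
  qed
  ultimately show ?thesis by (rule Lim_transform)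
qed

lemma completion_ex_mem: "A \<in> completion X d \<Longrightarrow> \<exists>a. a \<in> A"
  unfolding completion_def using seq_class_refl by blast

lemma pmet1_completion: "pmet1 (completion X d) (completion_dist d)"
  unfolding pmet1_def
proof (intro conjI ballI)
  fix A B C assume A: "A \<in> completion X d" and B: "B \<in> completion X d" and C: "C \<in> completion X d"
  then obtain a b c where "a \<in> A" "b \<in> B" "c \<in> C" using completion_ex_mem by metis
  then have "cauchy_in X d a" "cauchy_in X d b" "cauchy_in X d c"
    using A B C cauchy_in_if_mem_completion by blast+
  then have X: "a n \<in> X" "b n \<in> X" "c n \<in> X" for n
    unfolding cauchy_in_def by simp_all
  have lim_AA: "(\<lambda>n. d (a n) (a n)) \<longlonglongrightarrow> completion_dist d A A"
    and lim_AB: "(\<lambda>n. d (a n) (b n)) \<longlonglongrightarrow> completion_dist d A B"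
    and lim_BA: "(\<lambda>n. d (b n) (a n)) \<longlonglongrightarrow> completion_dist d B A"
    and lim_BC: "(\<lambda>n. d (b n) (c n)) \<longlonglongrightarrow> completion_dist d B C"
    and lim_AC: "(\<lambda>n. d (a n) (c n)) \<longlonglongrightarrow> completion_dist d A C"
    using completion_dist_tendsto A B C \<open>a \<in> A\<close> \<open>b \<in> B\<close> \<open>c \<in> C\<close> by blast+
  show "completion_dist d A A = 0"
    using lim_AA pmet1D(1)[OF pmet X(1)] by (simp add: LIMSEQ_const_iff)
  show "completion_dist d A B = completion_dist d B A"
    using lim_BA pmet1D(2)[OF pmet X(1,2)] by (simp add: LIMSEQ_unique[OF lim_AB])
  show "completion_dist d A C \<le> completion_dist d A B + completion_dist d B C"
    by (rule LIMSEQ_le[OF lim_AC tendsto_add[OF lim_AB lim_BC]])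
      (use pmet1D(5)[OF pmet X(1,2,3)] in blast)
  show "0 \<le> completion_dist d A B"
    by (rule LIMSEQ_le_const[OF lim_AB]) (use pmet1D(3)[OF pmet X(1,2)] in blast)
  show "completion_dist d A B \<le> 1"
    by (rule LIMSEQ_le_const2[OF lim_AB]) (use pmet1D(4)[OF pmet X(1,2)] in blast)
qed

lemma completion_dist_emb:
  assumes "x \<in> X" "x' \<in> X"
  shows "completion_dist d (completion_emb X d x) (completion_emb X d x') = d x x'"
  using completion_dist_tendsto[OF completion_emb_mem const_mem_completion_emb
      completion_emb_mem const_mem_completion_emb, OF assms(1,1,2,2)]
  by (simp add: LIMSEQ_const_iff)

lemma completion_emb_dense:
  assumes B: "B \<in> completion X d" and "\<epsilon> > 0"
  shows "\<exists>x\<in>X. completion_dist d (completion_emb X d x) B < \<epsilon>"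
proof -
  obtain b where "b \<in> B" using completion_ex_mem[OF B] by blast
  then have b: "cauchy_in X d b" using B cauchy_in_if_mem_completion by blast
  then obtain N where N: "\<And>n. n \<ge> N \<Longrightarrow> d (b N) (b n) < \<epsilon> / 2"
    using \<open>\<epsilon> > 0\<close> unfolding cauchy_in_def by (meson half_gt_zero order_refl)
  have "b N \<in> X" using b unfolding cauchy_in_def by blast
  have "(\<lambda>n. d (b N) (b n)) \<longlonglongrightarrow> completion_dist d (completion_emb X d (b N)) B"
    using completion_dist_tendsto[OF completion_emb_mem const_mem_completion_emb B \<open>b \<in> B\<close>]
      \<open>b N \<in> X\<close> by blast
  then have "completion_dist d (completion_emb X d (b N)) B \<le> \<epsilon> / 2"
    by (rule LIMSEQ_le_const2) (use N less_imp_le in blast)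
  then show ?thesis using \<open>b N \<in> X\<close> \<open>\<epsilon> > 0\<close> by (intro bexI[of _ "b N"]) auto
qed

end

theorem mainTheorem10:
  fixes X :: "'a set" and d :: "'a \<Rightarrow> 'a \<Rightarrow> real"
  assumes "pmet1 X d"
  shows "er_iso X d (completion X d) (completion_dist d)
           (G_map (completion_dist d) (completion_emb X d))"
proof -
  interpret isometric_embedding X d "completion X d" "completion_dist d" "completion_emb X d"
    using assms by unfold_locales
      (auto intro: pmet1_completion completion_emb_mem completion_dist_emb)
  show ?thesis
    unfolding G_map_def using er_iso_embedding completion_emb_dense[OF assms] by blast
qed

end
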